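(* Let $R$ be a commutative ring with identity and $M$ a non-zero comultiplication $R$-module. Then $M$ is uniform if and only if $M$ is cocyclic.
   Context: An $R$-module $M$ is a comultiplication module if for every submodule $N$ of $M$ there is an ideal $I$ of $R$ with $N=\mathrm{Ann}_M(I)$. $M$ is uniform if any two non-zero submodules of $M$ have non-zero intersection. $\mathrm{Soc}(M)$ is the sum of all minimal submodules of $M$; $M$ is cocyclic if $\mathrm{Soc}(M)$ is a simple submodule of $M$ that is large in $M$ (a submodule $N$ is large if $N\cap L\neq0$ for every non-zero submodule $L$). *)

theory Defs
  imports "HOL-Algebra.Module" "HOL-Algebra.Ideal"
begin

definition annM :: "('a, 'c) ring_scheme \<Rightarrow> ('a, 'b, 'd) module_scheme \<Rightarrow> 'a set \<Rightarrow> 'b set" where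
  "annM R M I = {x \<in> carrier M. \<forall>a\<in>I. a \<odot>\<^bsub>M\<^esub> x = \<zero>\<^bsub>M\<^esub>}"

definition comultiplication_module :: "('a, 'c) ring_scheme \<Rightarrow> ('a, 'b, 'd) module_scheme \<Rightarrow> bool" where
  "comultiplication_module R M \<longleftrightarrow>
     (\<forall>N. submodule N R M \<longrightarrow> (\<exists>I. ideal I R \<and> N = annM R M I))"

definition uniform_module :: "('a, 'c) ring_scheme \<Rightarrow> ('a, 'b, 'd) module_scheme \<Rightarrow> bool" where
  "uniform_module R M \<longleftrightarrow>
     (\<forall>N L. submodule N R M \<and> submodule L R M \<and> N \<noteq> {\<zero>\<^bsub>M\<^esub>} \<and> L \<noteq> {\<zero>\<^bsub>M\<^esub>}
        \<longrightarrow> N \<inter> L \<noteq> {\<zero>\<^bsub>M\<^esub>})"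

definition minimal_submodule :: "('a, 'c) ring_scheme \<Rightarrow> ('a, 'b, 'd) module_scheme \<Rightarrow> 'b set \<Rightarrow> bool" where
  "minimal_submodule R M N \<longleftrightarrow>
     submodule N R M \<and> N \<noteq> {\<zero>\<^bsub>M\<^esub>} \<and>
     (\<forall>L. submodule L R M \<and> L \<subseteq> N \<longrightarrow> L = {\<zero>\<^bsub>M\<^esub>} \<or> L = N)"

text \<open>Socle: the sum of all minimal submodules, i.e. the smallest submodule containing
  all of them (equal to {0} if there are none).\<close>
definition socle :: "('a, 'c) ring_scheme \<Rightarrow> ('a, 'b, 'd) module_scheme \<Rightarrow> 'b set" where
  "socle R M = \<Inter>{L. submodule L R M \<and> (\<forall>N. minimal_submodule R M N \<longrightarrow> N \<subseteq> L)}"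

definition large_submodule :: "('a, 'c) ring_scheme \<Rightarrow> ('a, 'b, 'd) module_scheme \<Rightarrow> 'b set \<Rightarrow> bool" where
  "large_submodule R M N \<longleftrightarrow>
     submodule N R M \<and>
     (\<forall>L. submodule L R M \<and> L \<noteq> {\<zero>\<^bsub>M\<^esub>} \<longrightarrow> N \<inter> L \<noteq> {\<zero>\<^bsub>M\<^esub>})"

definition cocyclic_module :: "('a, 'c) ring_scheme \<Rightarrow> ('a, 'b, 'd) module_scheme \<Rightarrow> bool" where
  "cocyclic_module R M \<longleftrightarrow>
     minimal_submodule R M (socle R M) \<and> large_submodule R M (socle R M)"

end

theory Submission
  imports Defs
begin

text \<open>In a comultiplication module every non-zero submodule contains a simple one: for
  \<open>x \<noteq> 0\<close> choose, by Zorn, a submodule \<open>K \<subseteq> Rx\<close> maximal with \<open>x \<notin> K\<close>, write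
  \<open>K = Ann\<^sub>M(J)\<close> and pick \<open>j \<in> J\<close> with \<open>jx \<noteq> 0\<close>. Then \<open>R(jx)\<close> is simple: a non-zero
  \<open>z = j(rx)\<close> has \<open>rx \<notin> K\<close>, so \<open>x \<in> K + R(rx)\<close> by maximality, and applying \<open>j\<close>, which
  kills \<open>K\<close>, gives \<open>jx \<in> Rz\<close>. A uniform module has at most one simple submodule, which
  is then the socle and is large; conversely a large simple socle lies in every non-zero
  submodule, so any two of them meet.\<close>

definition cyclic_submodule :: "('a, 'c) ring_scheme \<Rightarrow> ('a, 'b, 'd) module_scheme \<Rightarrow> 'b \<Rightarrow> 'b set"
  where "cyclic_submodule R M x = {r \<odot>\<^bsub>M\<^esub> x | r. r \<in> carrier R}"

lemma socle_eq_unique_minimal: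
  assumes S: "minimal_submodule R M S" and unique: "\<And>S'. minimal_submodule R M S' \<Longrightarrow> S' = S"
  shows "socle R M = S"
  unfolding socle_def
proof (rule antisym)
  have "submodule S R M" using S unfolding minimal_submodule_def by blast
  then show "\<Inter>{L. submodule L R M \<and> (\<forall>N. minimal_submodule R M N \<longrightarrow> N \<subseteq> L)} \<subseteq> S"
    using unique by (intro Inter_lower) blast
  show "S \<subseteq> \<Inter>{L. submodule L R M \<and> (\<forall>N. minimal_submodule R M N \<longrightarrow> N \<subseteq> L)}"
    using S by (intro Inter_greatest) blast
qed

context module
begin

lemma submodule_zero_closed: "submodule N R M \<Longrightarrow> \<zero>\<^bsub>M\<^esub> \<in> N"
  by (metis submodule_def subgroup.one_closed monoid.select_convs(2))

lemma zero_submodule: "submodule {\<zero>\<^bsub>M\<^esub>} R M"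
  by (intro submoduleI) auto

lemma submodule_Int:
  assumes "submodule N R M" "submodule L R M"
  shows "submodule (N \<inter> L) R M"
  using submoduleE[OF assms(1)] submoduleE[OF assms(2)]
    submodule_zero_closed[OF assms(1)] submodule_zero_closed[OF assms(2)]
  by (intro submoduleI) auto

lemma submodule_Union_chain:
  assumes "C \<noteq> {}" and sub: "\<And>K. K \<in> C \<Longrightarrow> submodule K R M"
    and chain: "\<And>X Y. X \<in> C \<Longrightarrow> Y \<in> C \<Longrightarrow> X \<subseteq> Y \<or> Y \<subseteq> X"
  shows "submodule (\<Union>C) R M"
proof (intro submoduleI)
  show "\<Union>C \<subseteq> carrier M" using sub submoduleE(1) by blast
  show "\<zero>\<^bsub>M\<^esub> \<in> \<Union>C" using assms(1) sub submodule_zero_closed by blast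
  show "\<ominus>\<^bsub>M\<^esub> a \<in> \<Union>C" if "a \<in> \<Union>C" for a
    using that sub submoduleE(3) by blast
  show "c \<odot>\<^bsub>M\<^esub> a \<in> \<Union>C" if "c \<in> carrier R" "a \<in> \<Union>C" for c a
    using that sub submoduleE(4) by blast
  show "a \<oplus>\<^bsub>M\<^esub> b \<in> \<Union>C" if ab: "a \<in> \<Union>C" "b \<in> \<Union>C" for a b
  proof -
    obtain X Y where "X \<in> C" "Y \<in> C" "a \<in> X" "b \<in> Y" using ab by auto
    then show ?thesis using chain[of X Y] sub submoduleE(5) by (metis UnionI subsetD)
  qed
qed

lemma submodule_add_cyclic:
  assumes K: "submodule K R M" and w: "w \<in> carrier M"
  shows "submodule {k \<oplus>\<^bsub>M\<^esub> r \<odot>\<^bsub>M\<^esub> w | k r. k \<in> K \<and> r \<in> carrier R} R M"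
    (is "submodule ?S R M")
proof (intro submoduleI)
  note KE = submoduleE[OF K]
  show "?S \<subseteq> carrier M" using KE(1) w by auto
  show "\<zero>\<^bsub>M\<^esub> \<in> ?S"
    using w submodule_zero_closed[OF K] by (auto intro!: exI[of _ "\<zero>\<^bsub>M\<^esub>"] exI[of _ \<zero>])
  show "\<ominus>\<^bsub>M\<^esub> a \<in> ?S" if hyp: "a \<in> ?S" for a
  proof -
    obtain k r where a: "a = k \<oplus>\<^bsub>M\<^esub> r \<odot>\<^bsub>M\<^esub> w" "k \<in> K" "r \<in> carrier R" using hyp by auto
    moreover have "k \<in> carrier M" using a KE(1) by blast
    ultimately have "\<ominus>\<^bsub>M\<^esub> a = \<ominus>\<^bsub>M\<^esub> k \<oplus>\<^bsub>M\<^esub> (\<ominus> r) \<odot>\<^bsub>M\<^esub> w"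
      using w by (simp add: smult_l_minus M.minus_add)
    then show ?thesis using a KE(3) by blast
  qed
  show "a \<oplus>\<^bsub>M\<^esub> b \<in> ?S" if hyp: "a \<in> ?S" "b \<in> ?S" for a b
  proof -
    obtain k r where a: "a = k \<oplus>\<^bsub>M\<^esub> r \<odot>\<^bsub>M\<^esub> w" "k \<in> K" "r \<in> carrier R" using hyp by auto
    obtain k' r' where b: "b = k' \<oplus>\<^bsub>M\<^esub> r' \<odot>\<^bsub>M\<^esub> w" "k' \<in> K" "r' \<in> carrier R" using hyp by auto
    have "k \<in> carrier M" "k' \<in> carrier M" using a b KE(1) by blast+
    then have "a \<oplus>\<^bsub>M\<^esub> b = (k \<oplus>\<^bsub>M\<^esub> k') \<oplus>\<^bsub>M\<^esub> (r \<oplus> r') \<odot>\<^bsub>M\<^esub> w"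
      using a b w by (simp add: smult_l_distr M.a_ac)
    then show ?thesis using a b KE(5) by blast
  qed
  show "c \<odot>\<^bsub>M\<^esub> a \<in> ?S" if hyp: "c \<in> carrier R" "a \<in> ?S" for c a
  proof -
    obtain k r where a: "a = k \<oplus>\<^bsub>M\<^esub> r \<odot>\<^bsub>M\<^esub> w" "k \<in> K" "r \<in> carrier R" using hyp by auto
    moreover have "k \<in> carrier M" using a KE(1) by blast
    ultimately have "c \<odot>\<^bsub>M\<^esub> a = c \<odot>\<^bsub>M\<^esub> k \<oplus>\<^bsub>M\<^esub> (c \<otimes> r) \<odot>\<^bsub>M\<^esub> w"
      using w hyp by (simp add: smult_r_distr smult_assoc1)
    then show ?thesis using a KE(4) hyp by blast
  qed
qed

lemma submodule_cyclic:
  assumes "x \<in> carrier M"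
  shows "submodule (cyclic_submodule R M x) R M"
proof -
  have "cyclic_submodule R M x = {k \<oplus>\<^bsub>M\<^esub> r \<odot>\<^bsub>M\<^esub> x | k r. k \<in> {\<zero>\<^bsub>M\<^esub>} \<and> r \<in> carrier R}"
    using assms unfolding cyclic_submodule_def by force
  then show ?thesis using submodule_add_cyclic[OF zero_submodule assms] by simp
qed

lemma cyclic_submodule_self: "x \<in> carrier M \<Longrightarrow> x \<in> cyclic_submodule R M x"
  unfolding cyclic_submodule_def by (auto intro!: exI[of _ \<one>])

lemma cyclic_submodule_subset: "submodule N R M \<Longrightarrow> x \<in> N \<Longrightarrow> cyclic_submodule R M x \<subseteq> N"
  unfolding cyclic_submodule_def using submoduleE(4) by blast

lemma exists_maximal_submodule_avoiding:
  assumes "x \<in> carrier M" "x \<noteq> \<zero>\<^bsub>M\<^esub>"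
  obtains K where "submodule K R M" "K \<subseteq> cyclic_submodule R M x" "x \<notin> K"
    and "\<And>K'. submodule K' R M \<Longrightarrow> K \<subset> K' \<Longrightarrow> K' \<subseteq> cyclic_submodule R M x \<Longrightarrow> x \<in> K'"
proof -
  define A where "A = {K. submodule K R M \<and> K \<subseteq> cyclic_submodule R M x \<and> x \<notin> K}"
  have "{\<zero>\<^bsub>M\<^esub>} \<in> A"
    unfolding A_def using zero_submodule submodule_cyclic[OF assms(1)] submodule_zero_closed assms(2)
    by blast
  have "\<exists>K\<in>A. \<forall>X\<in>A. K \<subseteq> X \<longrightarrow> X = K"
  proof (rule subset_Zorn_nonempty)
    show "A \<noteq> {}" using \<open>{\<zero>\<^bsub>M\<^esub>} \<in> A\<close> by blast
    show "\<Union>C \<in> A" if "C \<noteq> {}" "subset.chain A C" for C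
      using that submodule_Union_chain[of C] unfolding A_def subset_chain_def by auto
  qed
  then obtain K where K: "K \<in> A" and max: "\<And>X. X \<in> A \<Longrightarrow> K \<subseteq> X \<Longrightarrow> X = K"
    by blast
  show ?thesis
  proof (rule that)
    show "submodule K R M" "K \<subseteq> cyclic_submodule R M x" "x \<notin> K" using K unfolding A_def by auto
    show "x \<in> K'" if "submodule K' R M" "K \<subset> K'" "K' \<subseteq> cyclic_submodule R M x" for K'
      using max[of K'] that unfolding A_def by blast
  qed
qed

lemma smult_mem_cyclic_submodule_of_nonzero:
  assumes K: "submodule K R M" "K \<subseteq> cyclic_submodule R M x"
    and K_max: "\<And>K'. submodule K' R M \<Longrightarrow> K \<subset> K' \<Longrightarrow> K' \<subseteq> cyclic_submodule R M x \<Longrightarrow> x \<in> K'"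
    and x: "x \<in> carrier M" and j: "j \<in> carrier R"
    and j_kills_K: "\<And>k. k \<in> K \<Longrightarrow> j \<odot>\<^bsub>M\<^esub> k = \<zero>\<^bsub>M\<^esub>"
    and r: "r \<in> carrier R" "r \<odot>\<^bsub>M\<^esub> (j \<odot>\<^bsub>M\<^esub> x) \<noteq> \<zero>\<^bsub>M\<^esub>"
  shows "j \<odot>\<^bsub>M\<^esub> x \<in> cyclic_submodule R M (r \<odot>\<^bsub>M\<^esub> (j \<odot>\<^bsub>M\<^esub> x))"
proof -
  define w where "w = r \<odot>\<^bsub>M\<^esub> x"
  have w: "w \<in> carrier M" using r x w_def by simp
  have jw: "j \<odot>\<^bsub>M\<^esub> w = r \<odot>\<^bsub>M\<^esub> (j \<odot>\<^bsub>M\<^esub> x)"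
    using r j x by (simp add: w_def smult_assoc1[symmetric] R.m_comm)
  define K' where "K' = {k \<oplus>\<^bsub>M\<^esub> s \<odot>\<^bsub>M\<^esub> w | k s. k \<in> K \<and> s \<in> carrier R}"
  have "K \<subset> K'"
  proof -
    have "k = k \<oplus>\<^bsub>M\<^esub> \<zero> \<odot>\<^bsub>M\<^esub> w" if "k \<in> K" for k
      using that w submoduleE(1)[OF K(1)] by auto
    then have "K \<subseteq> K'" unfolding K'_def by blast
    moreover have "w \<in> K'" unfolding K'_def using w submodule_zero_closed[OF K(1)]
      by (auto intro!: exI[of _ "\<zero>\<^bsub>M\<^esub>"] exI[of _ \<one>])
    moreover have "w \<notin> K" using j_kills_K jw r(2) by auto
    ultimately show ?thesis by blast
  qed
  moreover have "K' \<subseteq> cyclic_submodule R M x"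
  proof
    fix a assume "a \<in> K'"
    then obtain k s where a: "a = k \<oplus>\<^bsub>M\<^esub> s \<odot>\<^bsub>M\<^esub> w" "k \<in> K" "s \<in> carrier R"
      unfolding K'_def by blast
    have "w \<in> cyclic_submodule R M x" using r(1) unfolding w_def cyclic_submodule_def by blast
    then have "s \<odot>\<^bsub>M\<^esub> w \<in> cyclic_submodule R M x"
      using submoduleE(4)[OF submodule_cyclic[OF x]] a(3) by blast
    then show "a \<in> cyclic_submodule R M x"
      using a K(2) submoduleE(5)[OF submodule_cyclic[OF x]] by blast
  qed
  ultimately have "x \<in> K'" using K_max submodule_add_cyclic[OF K(1) w] unfolding K'_def by blast
  then obtain k s where xk: "x = k \<oplus>\<^bsub>M\<^esub> s \<odot>\<^bsub>M\<^esub> w" "k \<in> K" "s \<in> carrier R"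
    unfolding K'_def by auto
  have k: "k \<in> carrier M" using xk submoduleE(1)[OF K(1)] by auto
  have "j \<odot>\<^bsub>M\<^esub> x = j \<odot>\<^bsub>M\<^esub> k \<oplus>\<^bsub>M\<^esub> j \<odot>\<^bsub>M\<^esub> (s \<odot>\<^bsub>M\<^esub> w)"
    using xk k w j by (simp add: smult_r_distr)
  also have "\<dots> = (s \<otimes> j) \<odot>\<^bsub>M\<^esub> w"
    using j_kills_K[OF xk(2)] j xk(3) w by (simp add: smult_assoc1[symmetric] R.m_comm)
  also have "\<dots> = s \<odot>\<^bsub>M\<^esub> (r \<odot>\<^bsub>M\<^esub> (j \<odot>\<^bsub>M\<^esub> x))" using j xk(3) w jw by (simp add: smult_assoc1)
  finally show ?thesis using xk(3) unfolding cyclic_submodule_def by blast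
qed

lemma minimal_cyclic_submodule_smult:
  assumes K: "submodule K R M" "K \<subseteq> cyclic_submodule R M x"
    and K_max: "\<And>K'. submodule K' R M \<Longrightarrow> K \<subset> K' \<Longrightarrow> K' \<subseteq> cyclic_submodule R M x \<Longrightarrow> x \<in> K'"
    and x: "x \<in> carrier M" and j: "j \<in> carrier R" "j \<odot>\<^bsub>M\<^esub> x \<noteq> \<zero>\<^bsub>M\<^esub>"
    and j_kills_K: "\<And>k. k \<in> K \<Longrightarrow> j \<odot>\<^bsub>M\<^esub> k = \<zero>\<^bsub>M\<^esub>"
  shows "minimal_submodule R M (cyclic_submodule R M (j \<odot>\<^bsub>M\<^esub> x))"
  unfolding minimal_submodule_def
proof (intro conjI allI impI)
  let ?y = "j \<odot>\<^bsub>M\<^esub> x"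
  have y: "?y \<in> carrier M" using j x by simp
  show "submodule (cyclic_submodule R M ?y) R M" using submodule_cyclic[OF y] .
  show "cyclic_submodule R M ?y \<noteq> {\<zero>\<^bsub>M\<^esub>}" using cyclic_submodule_self[OF y] j(2) by auto
  fix L assume L: "submodule L R M \<and> L \<subseteq> cyclic_submodule R M ?y"
  show "L = {\<zero>\<^bsub>M\<^esub>} \<or> L = cyclic_submodule R M ?y"
  proof (cases "L = {\<zero>\<^bsub>M\<^esub>}")
    case False
    then obtain z where z: "z \<in> L" "z \<noteq> \<zero>\<^bsub>M\<^esub>" using submodule_zero_closed L by blast
    then obtain r where r: "r \<in> carrier R" "z = r \<odot>\<^bsub>M\<^esub> ?y" using L unfolding cyclic_submodule_def by auto
    then have "?y \<in> cyclic_submodule R M z"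
      using smult_mem_cyclic_submodule_of_nonzero[OF K K_max x j(1) j_kills_K r(1)] z(2) by simp
    then have "?y \<in> L" using cyclic_submodule_subset L z(1) by blast
    then show ?thesis using L cyclic_submodule_subset by blast
  qed simp
qed

lemma comultiplication_cyclic_contains_minimal:
  assumes co: "comultiplication_module R M" and x: "x \<in> carrier M" "x \<noteq> \<zero>\<^bsub>M\<^esub>"
  obtains S where "minimal_submodule R M S" "S \<subseteq> cyclic_submodule R M x"
proof -
  obtain K where K: "submodule K R M" "K \<subseteq> cyclic_submodule R M x" "x \<notin> K"
    and K_max: "\<And>K'. submodule K' R M \<Longrightarrow> K \<subset> K' \<Longrightarrow> K' \<subseteq> cyclic_submodule R M x \<Longrightarrow> x \<in> K'"
    by (rule exists_maximal_submodule_avoiding[OF x]) blast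
  obtain J where J: "ideal J R" "K = annM R M J"
    using co K(1) unfolding comultiplication_module_def by blast
  obtain j where j: "j \<in> J" "j \<odot>\<^bsub>M\<^esub> x \<noteq> \<zero>\<^bsub>M\<^esub>"
    using K(3) J(2) x(1) unfolding annM_def by auto
  have j_carrier: "j \<in> carrier R" using ideal.Icarr[OF J(1) j(1)] .
  have "minimal_submodule R M (cyclic_submodule R M (j \<odot>\<^bsub>M\<^esub> x))"
  proof (rule minimal_cyclic_submodule_smult[OF K(1,2) K_max x(1) j_carrier j(2)])
    show "j \<odot>\<^bsub>M\<^esub> k = \<zero>\<^bsub>M\<^esub>" if "k \<in> K" for k
      using that j(1) J(2) unfolding annM_def by blast
  qed
  moreover have "j \<odot>\<^bsub>M\<^esub> x \<in> cyclic_submodule R M x"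
    using j_carrier unfolding cyclic_submodule_def by blast
  then have "cyclic_submodule R M (j \<odot>\<^bsub>M\<^esub> x) \<subseteq> cyclic_submodule R M x"
    using cyclic_submodule_subset[OF submodule_cyclic[OF x(1)]] by blast
  ultimately show ?thesis by (rule that)
qed

lemma comultiplication_contains_minimal:
  assumes co: "comultiplication_module R M" and N: "submodule N R M" "N \<noteq> {\<zero>\<^bsub>M\<^esub>}"
  obtains S where "minimal_submodule R M S" "S \<subseteq> N"
proof -
  obtain x where x: "x \<in> N" "x \<noteq> \<zero>\<^bsub>M\<^esub>" using N submodule_zero_closed by blast
  then have "x \<in> carrier M" using N(1) submoduleE(1) by blast
  then obtain S where "minimal_submodule R M S" "S \<subseteq> cyclic_submodule R M x"
    using comultiplication_cyclic_contains_minimal[OF co _ x(2)] by blast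
  moreover have "cyclic_submodule R M x \<subseteq> N" using cyclic_submodule_subset[OF N(1) x(1)] .
  ultimately show ?thesis using that by blast
qed

lemma minimal_submodule_subset:
  assumes S: "minimal_submodule R M S" and N: "submodule N R M" and meet: "S \<inter> N \<noteq> {\<zero>\<^bsub>M\<^esub>}"
  shows "S \<subseteq> N"
proof -
  have "submodule S R M" using S unfolding minimal_submodule_def by blast
  then have "submodule (S \<inter> N) R M" using submodule_Int N by blast
  then have "S \<inter> N = {\<zero>\<^bsub>M\<^esub>} \<or> S \<inter> N = S"
    using S unfolding minimal_submodule_def by blast
  then show ?thesis using meet by blast
qed

lemma uniform_if_cocyclic:
  assumes "cocyclic_module R M"
  shows "uniform_module R M"
  unfolding uniform_module_def
proof (intro allI impI)
  let ?S = "socle R M"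
  have S: "minimal_submodule R M ?S" "large_submodule R M ?S"
    using assms unfolding cocyclic_module_def by auto
  have S_below: "?S \<subseteq> N" if "submodule N R M" "N \<noteq> {\<zero>\<^bsub>M\<^esub>}" for N
  proof (rule minimal_submodule_subset[OF S(1) that(1)])
    show "?S \<inter> N \<noteq> {\<zero>\<^bsub>M\<^esub>}" using S(2) that unfolding large_submodule_def by blast
  qed
  fix N L assume "submodule N R M \<and> submodule L R M \<and> N \<noteq> {\<zero>\<^bsub>M\<^esub>} \<and> L \<noteq> {\<zero>\<^bsub>M\<^esub>}"
  then have "?S \<subseteq> N \<inter> L" using S_below by blast
  moreover have "?S \<noteq> {\<zero>\<^bsub>M\<^esub>}" "\<zero>\<^bsub>M\<^esub> \<in> ?S"
    using S(1) submodule_zero_closed unfolding minimal_submodule_def by blast+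
  ultimately show "N \<inter> L \<noteq> {\<zero>\<^bsub>M\<^esub>}" by blast
qed

lemma cocyclic_if_uniform:
  assumes U: "uniform_module R M" and S: "minimal_submodule R M S"
  shows "cocyclic_module R M"
proof -
  have S_sub: "submodule S R M" "S \<noteq> {\<zero>\<^bsub>M\<^esub>}" using S unfolding minimal_submodule_def by auto
  have "S' = S" if S': "minimal_submodule R M S'" for S'
  proof -
    have S'_sub: "submodule S' R M" "S' \<noteq> {\<zero>\<^bsub>M\<^esub>}" using S' unfolding minimal_submodule_def by auto
    then have "S \<inter> S' \<noteq> {\<zero>\<^bsub>M\<^esub>}" using U S_sub unfolding uniform_module_def by blast
    then have "S \<subseteq> S'" "S' \<subseteq> S"
      using minimal_submodule_subset S S' S_sub(1) S'_sub(1) by (auto simp: Int_commute)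
    then show ?thesis by blast
  qed
  then have socle: "socle R M = S" using socle_eq_unique_minimal S by blast
  have "large_submodule R M S"
    using U S_sub unfolding large_submodule_def uniform_module_def by blast
  then show ?thesis using S unfolding cocyclic_module_def socle by blast
qed

end

theorem lemma2p5:
  fixes R :: "('a, 'c) ring_scheme" and M :: "('a, 'b, 'd) module_scheme"
  assumes "module R M"
    and "carrier M \<noteq> {\<zero>\<^bsub>M\<^esub>}"
    and "comultiplication_module R M"
  shows "uniform_module R M \<longleftrightarrow> cocyclic_module R M"
proof -
  interpret module R M by fact
  obtain S where S: "minimal_submodule R M S"
    using comultiplication_contains_minimal[OF assms(3) carrier_is_submodule assms(2)] .
  show ?thesis
  proof
    show "uniform_module R M \<Longrightarrow> cocyclic_module R M" by (rule cocyclic_if_uniform[OF _ S])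
    show "cocyclic_module R M \<Longrightarrow> uniform_module R M" by (rule uniform_if_cocyclic)
  qed
qed

end
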